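(* Let $A\in\mathbb{R}^{n\times n}$ be symmetric with eigenvalues $\alpha_1\ge\cdots\ge\alpha_n$, $g\in\mathbb{R}^n$ nonzero, $\Delta>0$, and consider the TRS of minimizing $\frac12x^TAx+x^Tg$ subject to $\|x\|\le\Delta$, in the easy case. With the notation of the context, suppose $\|x_{opt}\|=\|x_k\|=\Delta$. Then $$\sin\angle(x_{opt},x_k)\le\sqrt\kappa\sqrt{\sin^2\angle(x_{opt},\mathcal{K}_k)+\sin^4\angle(x_{opt},\mathcal{K}_k)}\le2\sqrt\kappa\Big(\frac{\sqrt\kappa-1}{\sqrt\kappa+1}\Big)^k+4\sqrt\kappa\Big(\frac{\sqrt\kappa-1}{\sqrt\kappa+1}\Big)^{2k},$$ where $\mathcal{K}_k=\mathcal{K}_k(A,g)$.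
   Context: Norms are Euclidean. $x_{opt}$ is a global minimizer of the TRS with multiplier $\lambda_{opt}\ge0$ ($(A+\lambda_{opt}I)x_{opt}=-g$, $\lambda_{opt}(\Delta-\|x_{opt}\|)=0$, $A+\lambda_{opt}I\succeq0$); easy case: $\lambda_{opt}>-\alpha_n$. $\kappa=(\alpha_1+\lambda_{opt})/(\alpha_n+\lambda_{opt})$. $\mathcal{K}_k(A,g)=\mathrm{span}\{g,Ag,\ldots,A^{k-1}g\}$ with orthonormal basis $Q_k$ from the Lanczos process ($q_1=g/\|g\|$, $T_k=Q_k^TAQ_k$ tridiagonal). GLTR iterate $x_k=Q_kh_k$ where $h_k$ minimizes $\frac12h^TT_kh+\|g\|h^Te_1$ over $\|h\|\le\Delta$. For a nonzero vector $p$ and subspace $\mathcal{W}$ with orthonormal basis $W$, $\sin\angle(p,\mathcal{W})=\|(I-WW^T)p\|/\|p\|$; for vectors, $\sin\angle(x_{opt},x_k)=\min_{\chi}\|x_{opt}/\Delta-\chi x_k\|$. *)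

theory Defs
  imports "HOL-Analysis.Analysis"
begin

definition trs_obj :: "real^'n^'n \<Rightarrow> real^'n \<Rightarrow> real^'n \<Rightarrow> real" where
  "trs_obj A g x = (1/2) * (x \<bullet> (A *v x)) + x \<bullet> g"

definition real_eigenvalues :: "real^'n^'n \<Rightarrow> real set" where
  "real_eigenvalues A = {\<mu>. \<exists>v. v \<noteq> 0 \<and> A *v v = \<mu> *\<^sub>R v}"

definition eig_max :: "real^'n^'n \<Rightarrow> real" where
  "eig_max A = Max (real_eigenvalues A)"

definition eig_min :: "real^'n^'n \<Rightarrow> real" where
  "eig_min A = Min (real_eigenvalues A)"

definition krylov :: "real^'n^'n \<Rightarrow> real^'n \<Rightarrow> nat \<Rightarrow> (real^'n) set" where
  "krylov A g k = span {((\<lambda>v. A *v v) ^^ j) g | j. j < k}"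

text \<open>sin of the angle between a nonzero vector p and a subspace W:
  norm ((I - W W^T) p) / norm p, where the columns of W form an orthonormal basis of W;
  W W^T p = sum over basis vectors b of (b . p) b.\<close>
definition sin_angle_subspace :: "'a::euclidean_space \<Rightarrow> 'a set \<Rightarrow> real" where
  "sin_angle_subspace p W =
    (let B = (SOME B. B \<subseteq> W \<and> pairwise orthogonal B \<and> (\<forall>b\<in>B. norm b = 1) \<and> span B = W)
     in norm (p - (\<Sum>b\<in>B. (b \<bullet> p) *\<^sub>R b)) / norm p)"

text \<open>GLTR iterate: x_k = Q_k h_k with h_k minimizing 1/2 h^T T_k h + ||g|| h^T e_1 over
  ||h|| <= Delta. Since Q_k is an orthonormal basis of K_k with Q_k^T g = ||g|| e_1 and
  T_k = Q_k^T A Q_k, this is exactly: x_k minimizes the TRS objective over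
  K_k(A,g) intersected with the ball of radius Delta.\<close>
definition gltr_iterate :: "real^'n^'n \<Rightarrow> real^'n \<Rightarrow> real \<Rightarrow> nat \<Rightarrow> real^'n \<Rightarrow> bool" where
  "gltr_iterate A g \<Delta> k x \<longleftrightarrow>
     x \<in> krylov A g k \<and> norm x \<le> \<Delta> \<and>
     (\<forall>y \<in> krylov A g k. norm y \<le> \<Delta> \<longrightarrow> trs_obj A g x \<le> trs_obj A g y)"

end

(*
  Put M = A + lam_opt I. In the easy case M is positive definite with spectrum in [a, b],
  a = alpha_n + lam_opt, b = alpha_1 + lam_opt, and M x_opt = -g, so K_k(A, g) = K_k(M, g).

  On the sphere of radius Delta the TRS objective exceeds its minimum by exactly half the
  energy (z - x_opt)^T M (z - x_opt). The GLTR iterate therefore has no more energy error than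
  the rescaled orthogonal projection of x_opt onto K_k, whose distance to x_opt is controlled by
  s = sin(x_opt, K_k); this gives a |x_k - x_opt|^2 <= b Delta^2 (s^2 + s^4).

  For every polynomial R of degree at most k with R(0) = 1, the vector x_opt - R(M) x_opt lies
  in K_k(M, g), so s is at most the maximum of |R| on [a, b]. The rescaled Chebyshev
  polynomial makes this maximum at most 2 ((sqrt kappa - 1)/(sqrt kappa + 1))^k.
*)
theory Submission
  imports Defs "HOL-Computational_Algebra.Polynomial"
begin

lemma inner_matrix_vector_symmetric:
  fixes A :: "real^'n^'n"
  assumes "transpose A = A"
  shows "u \<bullet> (A *v w) = (A *v u) \<bullet> w"
  by (metis assms dot_lmul_matrix vector_transpose_matrix)

lemma matrix_vector_mult_shift:
  fixes A :: "real^'n^'n"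
  shows "(A + c *\<^sub>R mat 1) *v v = A *v v + c *\<^sub>R v"
  by (simp add: matrix_vector_mult_add_rdistrib scaleR_matrix_vector_assoc[symmetric])

lemma transpose_shift:
  fixes A :: "real^'n^'n"
  shows "transpose (A + c *\<^sub>R mat 1) = transpose A + c *\<^sub>R mat 1"
  by (simp add: transpose_def vec_eq_iff mat_def)

lemma eq_0_if_quadratic_nonpos:
  fixes N d :: real
  assumes "0 \<le> N" and "\<And>t. 2 * t * N + t\<^sup>2 * d \<le> 0"
  shows "N = 0"
proof (rule ccontr)
  assume "N \<noteq> 0"
  with assms(1) have N: "N > 0" by simp
  define t where "t = N / (\<bar>d\<bar> + 1)"
  have t: "t > 0" "t * \<bar>d\<bar> < N"
    using N by (auto simp: t_def field_simps)
  have "t * (2 * N + t * d) \<le> 0"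
    using assms(2)[of t] by (simp add: algebra_simps power2_eq_square)
  with t(1) have "2 * N + t * d \<le> 0" by (simp add: mult_le_0_iff)
  moreover have "- (t * \<bar>d\<bar>) \<le> t * d"
    using t(1) by (metis abs_ge_minus_self abs_mult abs_of_pos minus_le_iff)
  ultimately show False using t N by linarith
qed

lemma symmetric_matrix_eigenvector_in_invariant_subspace:
  fixes A :: "real^'n^'n"
  assumes sym: "transpose A = A" and S: "subspace S" "S \<noteq> {0}"
    and inv: "\<And>v. v \<in> S \<Longrightarrow> A *v v \<in> S"
  obtains u where "u \<in> S" "norm u = 1" "A *v u = (u \<bullet> (A *v u)) *\<^sub>R u"
proof -
  let ?T = "sphere 0 1 \<inter> S"
  obtain v where "v \<in> S" "v \<noteq> 0" using S subspace_0 by blast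
  then have "v /\<^sub>R norm v \<in> ?T" using S by (simp add: subspace_scale)
  then have "?T \<noteq> {}" by blast
  then have "\<exists>u\<in>?T. \<forall>z\<in>?T. z \<bullet> (A *v z) \<le> u \<bullet> (A *v u)"
    using S by (intro continuous_attains_sup compact_Int_closed compact_sphere closed_subspace
        continuous_intros)
  then obtain u where uT: "u \<in> ?T" and umax: "\<And>z. z \<in> ?T \<Longrightarrow> z \<bullet> (A *v z) \<le> u \<bullet> (A *v u)"
    by blast
  define f where "f = u \<bullet> (A *v u)"
  define w where "w = A *v u - f *\<^sub>R u"
  have uS: "u \<in> S" and uu: "u \<bullet> u = 1" using uT by (auto simp: norm_eq_1)
  have wS: "w \<in> S" using uS inv S by (simp add: w_def subspace_diff subspace_scale)
  have uw: "u \<bullet> w = 0" using uu by (simp add: w_def f_def inner_diff_right)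
  have wAu: "w \<bullet> (A *v u) = w \<bullet> w"
  proof -
    have "A *v u = w + f *\<^sub>R u" by (simp add: w_def)
    then show ?thesis using uw by (simp add: inner_add_right inner_commute)
  qed
  have rayleigh: "z \<bullet> (A *v z) \<le> f * (z \<bullet> z)" if "z \<in> S" for z
  proof (cases "z = 0")
    case False
    then have "z /\<^sub>R norm z \<in> ?T" using that S by (simp add: subspace_scale)
    then have "(z /\<^sub>R norm z) \<bullet> (A *v (z /\<^sub>R norm z)) \<le> f" using umax f_def by blast
    then have "(z \<bullet> (A *v z)) / (norm z)\<^sup>2 \<le> f"
      by (simp add: matrix_vector_mult_scaleR power2_eq_square divide_simps)
    with False show ?thesis by (simp add: divide_le_eq power2_norm_eq_inner)
  qed simp
  \<comment> \<open>Perturbing the maximiser along the residual w contradicts maximality unless w = 0.\<close>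
  have "2 * t * (w \<bullet> w) + t\<^sup>2 * (w \<bullet> (A *v w) - f * (w \<bullet> w)) \<le> 0" for t
  proof -
    have "u \<bullet> (A *v w) = w \<bullet> (A *v u)"
      using inner_matrix_vector_symmetric[OF sym, of u w] by (simp add: inner_commute)
    then have energy: "(u + t *\<^sub>R w) \<bullet> (A *v (u + t *\<^sub>R w))
        = f + 2 * t * (w \<bullet> w) + t\<^sup>2 * (w \<bullet> (A *v w))"
      using wAu by (simp add: matrix_vector_right_distrib matrix_vector_mult_scaleR inner_add_left
          inner_add_right f_def power2_eq_square algebra_simps)
    have norm: "(u + t *\<^sub>R w) \<bullet> (u + t *\<^sub>R w) = 1 + t\<^sup>2 * (w \<bullet> w)"
      using uu uw by (simp add: inner_add_left inner_add_right inner_commute power2_eq_square)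
    have "u + t *\<^sub>R w \<in> S" using uS wS S by (simp add: subspace_add subspace_scale)
    then show ?thesis using energy norm rayleigh[of "u + t *\<^sub>R w"] by (simp add: algebra_simps)
  qed
  then have "w \<bullet> w = 0" by (intro eq_0_if_quadratic_nonpos) simp_all
  then have "w = 0" by simp
  then show ?thesis using that uS uT by (simp add: w_def f_def)
qed

lemma inner_sum_orthonormal:
  fixes E :: "'a::real_inner set"
  assumes "finite E" "pairwise orthogonal E" "\<And>e. e \<in> E \<Longrightarrow> norm e = 1" "f \<in> E"
  shows "f \<bullet> (\<Sum>e\<in>E. c e *\<^sub>R e) = c f"
proof -
  have "f \<bullet> e = (if f = e then 1 else 0)" if "e \<in> E" for e
    using assms that by (auto simp: pairwise_def orthogonal_def norm_eq_1)
  then have "f \<bullet> (\<Sum>e\<in>E. c e *\<^sub>R e) = (\<Sum>e\<in>E. if f = e then c e else 0)"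
    by (auto simp: inner_sum_right intro: sum.cong)
  then show ?thesis using assms by (simp add: sum.delta)
qed

lemma symmetric_matrix_orthonormal_eigenbasis:
  fixes A :: "real^'n^'n"
  assumes sym: "transpose A = A"
  obtains E mu where "finite E" "\<forall>e\<in>E. norm e = 1 \<and> A *v e = mu e *\<^sub>R e"
    "\<forall>v w. v \<bullet> w = (\<Sum>e\<in>E. (e \<bullet> v) * (e \<bullet> w))"
proof -
  define eigensystem where "eigensystem E \<longleftrightarrow>
    pairwise orthogonal E \<and> (\<forall>e\<in>E. norm e = 1 \<and> (\<exists>\<mu>. A *v e = \<mu> *\<^sub>R e))" for E :: "(real^'n) set"
  have bounded: "finite E \<and> card E < Suc DIM(real^'n)" if "eigensystem E" for E
  proof -
    have "independent E"
      using that unfolding eigensystem_def by (intro pairwise_orthogonal_independent) auto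
    then show ?thesis using independent_bound by (metis less_Suc_eq_le)
  qed
  obtain E where E: "eigensystem E" and maximal: "\<And>F. eigensystem F \<Longrightarrow> card F \<le> card E"
    using ex_has_greatest_nat[of eigensystem "{}" card "Suc DIM(real^'n)"] bounded
    by (auto simp: eigensystem_def)
  have fin: "finite E" using bounded E by blast
  have po: "pairwise orthogonal E" and unit: "\<And>e. e \<in> E \<Longrightarrow> norm e = 1"
    and "\<And>e. e \<in> E \<Longrightarrow> \<exists>\<mu>. A *v e = \<mu> *\<^sub>R e" using E unfolding eigensystem_def by auto
  then obtain mu where mu: "\<And>e. e \<in> E \<Longrightarrow> A *v e = mu e *\<^sub>R e" by metis
  \<comment> \<open>By maximality of E, its orthogonal complement contains no eigenvector, hence is trivial.\<close>
  have complement: "v = 0" if "\<forall>e\<in>E. e \<bullet> v = 0" for v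
  proof (rule ccontr)
    define S where "S = {v. \<forall>e\<in>E. e \<bullet> v = 0}"
    assume "v \<noteq> 0"
    with that have "S \<noteq> {0}" by (auto simp: S_def)
    moreover have "subspace S" by (auto simp: S_def subspace_def inner_add_right)
    moreover have "A *v z \<in> S" if "z \<in> S" for z
      using that mu inner_matrix_vector_symmetric[OF sym] by (auto simp: S_def)
    ultimately obtain u where u: "u \<in> S" "norm u = 1" "A *v u = (u \<bullet> (A *v u)) *\<^sub>R u"
      using symmetric_matrix_eigenvector_in_invariant_subspace[OF sym] by metis
    then have "u \<notin> E" by (auto simp: S_def)
    moreover have "eigensystem (insert u E)"
      using E u by (auto simp: eigensystem_def pairwise_insert S_def orthogonal_def inner_commute)
    ultimately show False using maximal[of "insert u E"] fin by simp
  qed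
  have expand: "v = (\<Sum>e\<in>E. (e \<bullet> v) *\<^sub>R e)" for v
    using complement[of "v - (\<Sum>e\<in>E. (e \<bullet> v) *\<^sub>R e)"] inner_sum_orthonormal[OF fin po unit]
    by (simp add: inner_diff_right)
  have "v \<bullet> w = (\<Sum>e\<in>E. (e \<bullet> v) * (e \<bullet> w))" for v w
    using arg_cong[OF expand[of v], of "\<lambda>x. x \<bullet> w"] by (simp add: inner_sum_left)
  with that fin unit mu show ?thesis by blast
qed

lemma real_eigenvalues_eq_image_eigenbasis:
  fixes A :: "real^'n^'n"
  assumes sym: "transpose A = A" and eig: "\<forall>e\<in>E. norm e = 1 \<and> A *v e = mu e *\<^sub>R e"
    and parseval: "\<forall>v w. v \<bullet> w = (\<Sum>e\<in>E. (e \<bullet> v) * (e \<bullet> w))"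
  shows "real_eigenvalues A = mu ` E"
proof
  show "mu ` E \<subseteq> real_eigenvalues A"
  proof (rule image_subsetI)
    fix e assume "e \<in> E"
    then have "e \<noteq> 0" "A *v e = mu e *\<^sub>R e" using eig by auto
    then show "mu e \<in> real_eigenvalues A" unfolding real_eigenvalues_def by blast
  qed
next
  show "real_eigenvalues A \<subseteq> mu ` E"
  proof
    fix t assume "t \<in> real_eigenvalues A"
    then obtain v where v: "v \<noteq> 0" "A *v v = t *\<^sub>R v" by (auto simp: real_eigenvalues_def)
    then have "(\<Sum>e\<in>E. (e \<bullet> v) * (e \<bullet> v)) \<noteq> 0"
      using parseval[rule_format, of v v] by (metis inner_eq_zero_iff)
    then obtain e where e: "e \<in> E" "(e \<bullet> v) * (e \<bullet> v) \<noteq> 0"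
      by (rule sum.not_neutral_contains_not_neutral)
    have "t * (e \<bullet> v) = mu e * (e \<bullet> v)"
      using inner_matrix_vector_symmetric[OF sym, of e v] eig e(1) v(2) by simp
    with e show "t \<in> mu ` E" by simp
  qed
qed

lemma
  fixes A :: "real^'n^'n"
  assumes "transpose A = A"
  shows finite_real_eigenvalues: "finite (real_eigenvalues A)"
    and real_eigenvalues_nonempty: "real_eigenvalues A \<noteq> {}"
proof -
  obtain E mu where E: "finite E" "\<forall>e\<in>E. norm e = 1 \<and> A *v e = mu e *\<^sub>R e"
    and parseval: "\<forall>v w. v \<bullet> w = (\<Sum>e\<in>E. (e \<bullet> v) * (e \<bullet> w))"
    by (rule symmetric_matrix_orthonormal_eigenbasis[OF assms])
  have "E \<noteq> {}"
    using parseval[rule_format, of "1 :: real^'n" 1] by auto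
  with E show "finite (real_eigenvalues A)" "real_eigenvalues A \<noteq> {}"
    by (simp_all add: real_eigenvalues_eq_image_eigenbasis[OF assms E(2) parseval])
qed

lemma eigenvalue_between_eig_min_eig_max:
  fixes A :: "real^'n^'n"
  assumes "transpose A = A" "t \<in> real_eigenvalues A"
  shows "eig_min A \<le> t \<and> t \<le> eig_max A"
  using assms finite_real_eigenvalues[OF assms(1)] by (simp add: eig_min_def eig_max_def)

lemma eig_min_le_eig_max:
  fixes A :: "real^'n^'n"
  assumes "transpose A = A"
  shows "eig_min A \<le> eig_max A"
proof -
  obtain t where "t \<in> real_eigenvalues A" using real_eigenvalues_nonempty[OF assms] by blast
  then show ?thesis using eigenvalue_between_eig_min_eig_max[OF assms] by fastforce
qed

lemma rayleigh_quotient_bounds: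
  fixes A :: "real^'n^'n"
  assumes sym: "transpose A = A"
  shows "eig_min A * (v \<bullet> v) \<le> v \<bullet> (A *v v) \<and> v \<bullet> (A *v v) \<le> eig_max A * (v \<bullet> v)"
proof -
  obtain E mu where "finite E" and eig: "\<forall>e\<in>E. norm e = 1 \<and> A *v e = mu e *\<^sub>R e"
    and parseval: "\<forall>v w. v \<bullet> w = (\<Sum>e\<in>E. (e \<bullet> v) * (e \<bullet> w))"
    by (rule symmetric_matrix_orthonormal_eigenbasis[OF sym])
  have mu: "eig_min A \<le> mu e \<and> mu e \<le> eig_max A" if "e \<in> E" for e
    using eigenvalue_between_eig_min_eig_max[OF sym] that
    by (simp add: real_eigenvalues_eq_image_eigenbasis[OF sym eig parseval])
  have "e \<bullet> (A *v v) = mu e * (e \<bullet> v)" if "e \<in> E" for e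
    using inner_matrix_vector_symmetric[OF sym, of e v] eig that by simp
  then have "v \<bullet> (A *v v) = (\<Sum>e\<in>E. mu e * (e \<bullet> v)\<^sup>2)"
    using parseval[rule_format, of v "A *v v"]
    by (simp add: power2_eq_square mult.left_commute cong: sum.cong)
  moreover have "v \<bullet> v = (\<Sum>e\<in>E. (e \<bullet> v)\<^sup>2)"
    using parseval[rule_format, of v v] by (simp add: power2_eq_square)
  ultimately show ?thesis
    using mu by (auto simp: sum_distrib_left intro!: sum_mono mult_right_mono)
qed

lemma real_eigenvalues_shift:
  fixes A :: "real^'n^'n"
  shows "t \<in> real_eigenvalues (A + c *\<^sub>R mat 1) \<longleftrightarrow> t - c \<in> real_eigenvalues A"
  unfolding real_eigenvalues_def matrix_vector_mult_shift by (simp add: scaleR_diff_left eq_diff_eq)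

lemma subspace_krylov: "subspace (krylov A g k)"
  unfolding krylov_def by (rule subspace_span)

lemma krylov_mono:
  assumes "k \<le> l"
  shows "krylov A g k \<subseteq> krylov A g l"
  unfolding krylov_def using assms by (intro span_mono) auto

lemma matrix_vector_mult_krylov:
  assumes "v \<in> krylov A g k"
  shows "A *v v \<in> krylov A g (Suc k)"
proof -
  have "(*v) A ` {((*v) A ^^ j) g | j. j < k} \<subseteq> {((*v) A ^^ j) g | j. j < Suc k}"
  proof
    fix u assume "u \<in> (*v) A ` {((*v) A ^^ j) g | j. j < k}"
    then obtain j where "j < k" "u = A *v ((*v) A ^^ j) g" by blast
    then have "u = ((*v) A ^^ Suc j) g" "Suc j < Suc k" by simp_all
    then show "u \<in> {((*v) A ^^ j) g | j. j < Suc k}" by blast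
  qed
  then have "(*v) A ` krylov A g k \<subseteq> krylov A g (Suc k)"
    unfolding krylov_def span_linear_image[OF matrix_vector_mul_linear, symmetric]
    by (rule span_mono)
  with assms show ?thesis by blast
qed

lemma shifted_matrix_power_in_krylov:
  fixes A :: "real^'n^'n"
  shows "((*v) (A + c *\<^sub>R mat 1) ^^ j) g \<in> krylov A g (Suc j)"
proof (induction j)
  case 0
  show ?case unfolding krylov_def by (rule span_base) force
next
  case (Suc j)
  define u where "u = ((*v) (A + c *\<^sub>R mat 1) ^^ j) g"
  have "u \<in> krylov A g (Suc (Suc j))"
    using Suc.IH krylov_mono[of "Suc j" "Suc (Suc j)"] by (auto simp: u_def)
  moreover have "A *v u \<in> krylov A g (Suc (Suc j))"
    using Suc.IH by (simp add: u_def matrix_vector_mult_krylov)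
  ultimately have "A *v u + c *\<^sub>R u \<in> krylov A g (Suc (Suc j))"
    unfolding krylov_def by (intro span_add span_scale)
  moreover have "((*v) (A + c *\<^sub>R mat 1) ^^ Suc j) g = A *v u + c *\<^sub>R u"
    by (simp add: u_def matrix_vector_mult_shift)
  ultimately show ?case by simp
qed

lemma krylov_shift:
  fixes A :: "real^'n^'n"
  shows "krylov (A + c *\<^sub>R mat 1) g k = krylov A g k"
proof -
  have shift_subset: "krylov (B + d *\<^sub>R mat 1) g k \<subseteq> krylov B g k" for B :: "real^'n^'n" and d
  proof -
    have "((*v) (B + d *\<^sub>R mat 1) ^^ j) g \<in> krylov B g k" if "j < k" for j
      using shifted_matrix_power_in_krylov[where A = B and c = d] krylov_mono[of "Suc j" k B g] that
      by auto
    then show ?thesis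
      unfolding krylov_def[of "B + d *\<^sub>R mat 1"]
      by (intro span_minimal) (auto simp: krylov_def)
  qed
  from shift_subset[of A c] shift_subset[of "A + c *\<^sub>R mat 1" "- c"] show ?thesis
    by (simp add: algebra_simps)
qed

definition poly_mat_vec :: "real poly \<Rightarrow> real^'n^'n \<Rightarrow> real^'n \<Rightarrow> real^'n" where
  "poly_mat_vec p M v = (\<Sum>j\<le>degree p. coeff p j *\<^sub>R ((*v) M ^^ j) v)"

lemma poly_mat_vec_in_krylov:
  assumes "degree p < k"
  shows "poly_mat_vec p M g \<in> krylov M g k"
  unfolding poly_mat_vec_def krylov_def using assms by (intro span_sum span_scale span_base) auto

lemma poly_mat_vec_pCons:
  "poly_mat_vec (pCons a p) M v = a *\<^sub>R v + poly_mat_vec p M (M *v v)"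
proof (cases "p = 0")
  case False
  then have "degree (pCons a p) = Suc (degree p)" by simp
  then show ?thesis
    unfolding poly_mat_vec_def
    by (simp only: sum.atMost_Suc_shift) (simp add: funpow_Suc_right del: funpow.simps)
qed (simp add: poly_mat_vec_def)

lemma poly_mat_vec_uminus: "poly_mat_vec p M (- v) = - poly_mat_vec p M v"
proof -
  have "((*v) M ^^ j) (- v) = - ((*v) M ^^ j) v" for j
    by (induction j) (simp_all add: linear_neg[OF matrix_vector_mul_linear])
  then show ?thesis by (simp add: poly_mat_vec_def sum_negf)
qed

lemma inner_eigenvector_poly_mat_vec:
  fixes M :: "real^'n^'n"
  assumes sym: "transpose M = M" and e: "M *v e = \<mu> *\<^sub>R e"
  shows "e \<bullet> poly_mat_vec p M v = poly p \<mu> * (e \<bullet> v)"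
proof -
  have "e \<bullet> ((*v) M ^^ j) v = \<mu> ^ j * (e \<bullet> v)" for j
    by (induction j) (simp_all add: inner_matrix_vector_symmetric[OF sym] e)
  then show ?thesis
    by (simp add: poly_mat_vec_def inner_sum_right poly_altdef sum_distrib_right mult.assoc)
qed

lemma norm_poly_mat_vec_le:
  fixes M :: "real^'n^'n"
  assumes sym: "transpose M = M" and bound: "\<forall>t\<in>real_eigenvalues M. \<bar>poly p t\<bar> \<le> \<beta>"
  shows "norm (poly_mat_vec p M v) \<le> \<beta> * norm v"
proof -
  obtain E mu where "finite E" and eig: "\<forall>e\<in>E. norm e = 1 \<and> M *v e = mu e *\<^sub>R e"
    and parseval: "\<forall>v w. v \<bullet> w = (\<Sum>e\<in>E. (e \<bullet> v) * (e \<bullet> w))"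
    by (rule symmetric_matrix_orthonormal_eigenbasis[OF sym])
  have "0 \<le> \<beta>" using real_eigenvalues_nonempty[OF sym] bound by force
  have "(e \<bullet> poly_mat_vec p M v)\<^sup>2 \<le> (\<beta> * (e \<bullet> v))\<^sup>2" if "e \<in> E" for e
  proof -
    have "e \<bullet> poly_mat_vec p M v = poly p (mu e) * (e \<bullet> v)"
      using eig that by (intro inner_eigenvector_poly_mat_vec[OF sym]) auto
    moreover have "\<bar>poly p (mu e)\<bar> \<le> \<beta>"
      using bound that by (simp add: real_eigenvalues_eq_image_eigenbasis[OF sym eig parseval])
    ultimately have "\<bar>e \<bullet> poly_mat_vec p M v\<bar> \<le> \<bar>\<beta> * (e \<bullet> v)\<bar>"
      using \<open>0 \<le> \<beta>\<close> by (simp add: abs_mult mult_right_mono)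
    then show ?thesis by (simp only: abs_le_square_iff)
  qed
  then have "(\<Sum>e\<in>E. (e \<bullet> poly_mat_vec p M v)\<^sup>2) \<le> (\<Sum>e\<in>E. \<beta>\<^sup>2 * (e \<bullet> v)\<^sup>2)"
    by (intro sum_mono) (simp add: power_mult_distrib)
  also have "\<dots> = \<beta>\<^sup>2 * (\<Sum>e\<in>E. (e \<bullet> v)\<^sup>2)"
    by (rule sum_distrib_left[symmetric])
  also have "\<dots> = (\<beta> * norm v)\<^sup>2"
    unfolding power_mult_distrib power2_norm_eq_inner
    using parseval[rule_format, of v v] by (simp add: power2_eq_square)
  also have "(\<Sum>e\<in>E. (e \<bullet> poly_mat_vec p M v)\<^sup>2) = (norm (poly_mat_vec p M v))\<^sup>2"
    unfolding power2_norm_eq_inner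
    using parseval[rule_format, of "poly_mat_vec p M v" "poly_mat_vec p M v"]
    by (simp add: power2_eq_square)
  finally show ?thesis by (rule power2_le_imp_le) (use \<open>0 \<le> \<beta>\<close> in simp)
qed

lemma krylov_residual_poly:
  assumes Mx: "M *v x = - g" and R: "degree R \<le> k" "poly R 0 = 1"
  obtains y where "y \<in> krylov M g k" "x - y = poly_mat_vec R M x"
proof -
  obtain Q where Q: "R = pCons 1 Q" using R(2) by (cases R) simp
  have "poly_mat_vec Q M g \<in> krylov M g k"
  proof (cases "Q = 0")
    case True
    then show ?thesis by (simp add: poly_mat_vec_def krylov_def span_zero)
  next
    case False
    then show ?thesis using R(1) Q by (intro poly_mat_vec_in_krylov) simp
  qed
  moreover have "x - poly_mat_vec Q M g = poly_mat_vec R M x"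
    using Mx by (simp add: Q poly_mat_vec_pCons poly_mat_vec_uminus)
  ultimately show ?thesis using that by blast
qed

fun chebyshev_poly :: "nat \<Rightarrow> real poly" where
  "chebyshev_poly 0 = 1"
| "chebyshev_poly (Suc 0) = [:0, 1:]"
| "chebyshev_poly (Suc (Suc n)) = [:0, 2:] * chebyshev_poly (Suc n) - chebyshev_poly n"

lemma degree_chebyshev_poly_le: "degree (chebyshev_poly n) \<le> n"
proof (induction n rule: chebyshev_poly.induct)
  case (3 n)
  have "degree ([:0, 2:] * chebyshev_poly (Suc n)) \<le> Suc (Suc n)"
    using degree_mult_le[of "[:0, 2:]" "chebyshev_poly (Suc n)"] 3 by simp
  with 3 show ?case by (simp add: degree_diff_le)
qed simp_all

lemma poly_chebyshev_poly_cos: "poly (chebyshev_poly n) (cos \<theta>) = cos (real n * \<theta>)"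
proof (induction n rule: chebyshev_poly.induct)
  case (3 n)
  have "cos (real (Suc (Suc n)) * \<theta>) + cos (real n * \<theta>) = 2 * cos \<theta> * cos (real (Suc n) * \<theta>)"
    using cos_add[of "real (Suc n) * \<theta>" \<theta>] cos_diff[of "real (Suc n) * \<theta>" \<theta>]
    by (simp add: algebra_simps)
  with 3 show ?case by simp
qed simp_all

lemma abs_poly_chebyshev_poly_le_1:
  assumes "\<bar>x\<bar> \<le> 1"
  shows "\<bar>poly (chebyshev_poly n) x\<bar> \<le> 1"
  using poly_chebyshev_poly_cos[of n "arccos x"] assms by (simp add: cos_arccos_abs)

lemma poly_chebyshev_poly_reciprocal:
  assumes "z * w = 1"
  shows "poly (chebyshev_poly n) ((z + w) / 2) = (z ^ n + w ^ n) / 2"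
proof (induction n rule: chebyshev_poly.induct)
  case (3 n)
  have "(z + w) * (z ^ Suc n + w ^ Suc n)
      = z ^ Suc (Suc n) + w ^ Suc (Suc n) + (z * w) * (z ^ n + w ^ n)"
    by (simp add: algebra_simps)
  with 3 assms show ?case by (simp add: field_simps)
qed simp_all

lemma chebyshev_residual_poly_bound:
  fixes a b :: real
  assumes "0 < a" "a \<le> b"
  obtains R where "degree R \<le> k" "poly R 0 = 1"
    "\<And>v. a \<le> v \<Longrightarrow> v \<le> b \<Longrightarrow> \<bar>poly R v\<bar> \<le> 2 * ((sqrt (b / a) - 1) / (sqrt (b / a) + 1)) ^ k"
proof (cases "a = b")
  case True
  define R where "R = [:1, - 1 / a:] ^ k"
  have "degree R \<le> k"
    using degree_power_le[of "[:1, - 1 / a:]" k] \<open>0 < a\<close> by (simp add: R_def)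
  moreover have "\<bar>poly R v\<bar> \<le> 2 * ((sqrt (b / a) - 1) / (sqrt (b / a) + 1)) ^ k"
    if "a \<le> v" "v \<le> b" for v
    using that True \<open>0 < a\<close> by (simp add: R_def power_0_left)
  ultimately show ?thesis using that by (simp add: R_def)
next
  case False
  define t where "t = sqrt (b / a)"
  define \<rho> where "\<rho> = (t - 1) / (t + 1)"
  have t: "t > 1" "t\<^sup>2 = b / a" using assms False by (auto simp: t_def)
  have \<rho>: "0 < \<rho>" using t by (simp add: \<rho>_def)
  \<comment> \<open>The affine map L sends [a, b] onto [-1, 1] and 0 to (1/\<rho> + \<rho>)/2, where the Chebyshev
    polynomial is large.\<close>
  define L where "L = [:(b + a) / (b - a), - 2 / (b - a):]"
  have L0: "poly L 0 = (1 / \<rho> + \<rho>) / 2"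
  proof -
    have "poly L 0 = (b + a) / (b - a)" by (simp add: L_def)
    also have "\<dots> = (t\<^sup>2 + 1) / (t\<^sup>2 - 1)"
      unfolding t(2) using assms False by (simp add: field_simps)
    also have "\<dots> = (1 / \<rho> + \<rho>) / 2"
      using t(1) less_1_mult[OF t(1) t(1)] by (simp add: \<rho>_def field_simps power2_eq_square)
    finally show ?thesis .
  qed
  define C where "C = ((1 / \<rho>) ^ k + \<rho> ^ k) / 2"
  have C: "poly (chebyshev_poly k) (poly L 0) = C"
    unfolding L0 C_def by (rule poly_chebyshev_poly_reciprocal) (use \<rho> in simp)
  have "2 * \<rho> ^ k * C = 1 + \<rho> ^ k * \<rho> ^ k"
    using \<rho> by (simp add: C_def power_one_over field_simps)
  then have C_ge: "1 \<le> 2 * \<rho> ^ k * C" by simp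
  have "0 < C" using \<rho> by (simp add: C_def add_pos_pos)
  define R where "R = smult (1 / C) (pcompose (chebyshev_poly k) L)"
  have "degree R \<le> k"
    using degree_pcompose_le[of "chebyshev_poly k" L] degree_chebyshev_poly_le[of k] False
    by (auto simp: R_def L_def)
  moreover have "poly R 0 = 1"
    using C \<open>0 < C\<close> by (simp add: R_def poly_pcompose)
  moreover have "\<bar>poly R v\<bar> \<le> 2 * \<rho> ^ k" if "a \<le> v" "v \<le> b" for v
  proof -
    have "a < b" using assms False by simp
    have "poly L v = (b + a - 2 * v) / (b - a)"
      by (simp add: L_def diff_divide_distrib add_divide_distrib)
    moreover have "\<bar>b + a - 2 * v\<bar> \<le> b - a" using that by simp
    ultimately have "\<bar>poly L v\<bar> \<le> 1" using \<open>a < b\<close> by (simp add: abs_divide)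
    then have "\<bar>poly R v\<bar> \<le> 1 / C"
      using \<open>0 < C\<close> abs_poly_chebyshev_poly_le_1
      by (simp add: R_def poly_pcompose abs_mult divide_le_eq)
    also have "\<dots> \<le> 2 * \<rho> ^ k"
      using C_ge \<open>0 < C\<close> by (simp add: divide_le_eq)
    finally show ?thesis .
  qed
  ultimately show ?thesis using that by (simp add: \<rho>_def t_def)
qed

lemma sin_angle_subspace_eq_projection:
  fixes p :: "'a::euclidean_space"
  assumes W: "subspace W"
  obtains P where "P \<in> W" "\<forall>y\<in>W. (p - P) \<bullet> y = 0" "sin_angle_subspace p W = norm (p - P) / norm p"
proof -
  define B where "B = (SOME B. B \<subseteq> W \<and> pairwise orthogonal B \<and> (\<forall>b\<in>B. norm b = 1) \<and> span B = W)"
  have "\<exists>B. B \<subseteq> W \<and> pairwise orthogonal B \<and> (\<forall>b\<in>B. norm b = 1) \<and> span B = W"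
    using orthonormal_basis_subspace[OF W] by metis
  then have "B \<subseteq> W \<and> pairwise orthogonal B \<and> (\<forall>b\<in>B. norm b = 1) \<and> span B = W"
    unfolding B_def by (rule someI_ex)
  then have B: "pairwise orthogonal B" "\<And>b. b \<in> B \<Longrightarrow> norm b = 1" "span B = W"
    by auto
  have "finite B" using B(1) by (rule pairwise_orthogonal_imp_finite)
  define P where "P = (\<Sum>b\<in>B. (b \<bullet> p) *\<^sub>R b)"
  have "P \<in> W" unfolding P_def B(3)[symmetric] by (intro span_sum span_scale span_base)
  moreover have "(p - P) \<bullet> y = 0" if "y \<in> W" for y
  proof -
    have "orthogonal (p - P) b" if "b \<in> B" for b
    proof -
      have "b \<bullet> (p - P) = 0"
        using inner_sum_orthonormal[OF \<open>finite B\<close> B(1,2) that, of "\<lambda>b. b \<bullet> p"]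
        by (simp add: P_def inner_diff_right)
      then show ?thesis by (simp add: orthogonal_def inner_commute)
    qed
    with that show ?thesis using orthogonal_to_span B(3) by (auto simp: orthogonal_def)
  qed
  moreover have "sin_angle_subspace p W = norm (p - P) / norm p"
    unfolding sin_angle_subspace_def Let_def B_def[symmetric] P_def ..
  ultimately show ?thesis using that by blast
qed

lemma norm_diff_projection_le:
  fixes p :: "'a::real_inner"
  assumes "subspace W" "P \<in> W" "\<forall>y\<in>W. (p - P) \<bullet> y = 0" "y \<in> W"
  shows "norm (p - P) \<le> norm (p - y)"
proof -
  have "orthogonal (p - P) (P - y)"
    using assms by (simp add: orthogonal_def subspace_diff)
  then have "(norm (p - y))\<^sup>2 = (norm (p - P))\<^sup>2 + (norm (P - y))\<^sup>2"
    using norm_add_Pythagorean[of "p - P" "P - y"] by simp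
  then have "(norm (p - P))\<^sup>2 \<le> (norm (p - y))\<^sup>2" by simp
  then show ?thesis by (rule power2_le_imp_le) simp
qed

lemma exists_subspace_sphere_point:
  fixes x :: "'a::real_inner"
  assumes W: "subspace W" and P: "P \<in> W" "\<forall>y\<in>W. (x - P) \<bullet> y = 0"
    and u: "u \<in> W" "norm u = norm x"
  obtains y where "y \<in> W" "norm y = norm x"
    "(norm (y - x))\<^sup>2 = (norm x - norm P)\<^sup>2 + (norm (x - P))\<^sup>2"
proof (cases "P = 0")
  case True
  have "orthogonal u (- x)" using P(2) u(1) True by (simp add: orthogonal_def inner_commute)
  then have "(norm (u - x))\<^sup>2 = (norm u)\<^sup>2 + (norm x)\<^sup>2"
    using norm_add_Pythagorean[of u "- x"] by simp
  with u True show ?thesis using that by simp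
next
  case False
  define y where "y = (norm x / norm P) *\<^sub>R P"
  have "P \<bullet> (P - x) = 0" using P by (simp add: inner_diff_left inner_diff_right inner_commute)
  then have orth: "orthogonal ((norm x / norm P - 1) *\<^sub>R P) (P - x)"
    by (simp add: orthogonal_def)
  have "y - x = (norm x / norm P - 1) *\<^sub>R P + (P - x)"
    by (simp add: y_def algebra_simps)
  then have "(norm (y - x))\<^sup>2 = (norm ((norm x / norm P - 1) *\<^sub>R P))\<^sup>2 + (norm (P - x))\<^sup>2"
    using norm_add_Pythagorean[OF orth] by metis
  also have "norm ((norm x / norm P - 1) *\<^sub>R P) = \<bar>norm x - norm P\<bar>"
    using False by (simp add: abs_mult_pos left_diff_distrib)
  finally have "(norm (y - x))\<^sup>2 = (norm x - norm P)\<^sup>2 + (norm (x - P))\<^sup>2"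
    by (simp add: norm_minus_commute)
  moreover have "y \<in> W" "norm y = norm x"
    using W P(1) False by (simp_all add: y_def subspace_scale)
  ultimately show ?thesis using that by blast
qed

lemma square_diff_le_of_pythagorean:
  fixes d p s :: real
  assumes "0 \<le> p" "0 \<le> d" "p\<^sup>2 + (s * d)\<^sup>2 = d\<^sup>2"
  shows "(d - p)\<^sup>2 \<le> d\<^sup>2 * s ^ 4"
proof -
  have "p \<le> d" using assms by (metis le_add_same_cancel1 power2_le_imp_le zero_le_power2)
  then have "(d - p) * d \<le> (d - p) * (d + p)" using assms by (intro mult_left_mono) auto
  also have "\<dots> = (s\<^sup>2 * d) * d" using assms(3) by (simp add: algebra_simps power2_eq_square)
  finally have "(d - p) * d \<le> (s\<^sup>2 * d) * d" .
  then have "d - p \<le> s\<^sup>2 * d" using assms(1,2) \<open>p \<le> d\<close>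
    by (cases "d = 0") (auto simp: mult_le_cancel_right)
  then have "(d - p)\<^sup>2 \<le> (s\<^sup>2 * d)\<^sup>2" using \<open>p \<le> d\<close> by (intro power_mono) auto
  then show ?thesis by (simp add: power_mult_distrib mult.commute flip: power_mult)
qed

lemma trs_obj_diff_eq:
  fixes A :: "real^'n^'n"
  assumes sym: "transpose A = A" and kkt: "(A + lam *\<^sub>R mat 1) *v x = - g"
  shows "trs_obj A g z - trs_obj A g x
    = (z - x) \<bullet> ((A + lam *\<^sub>R mat 1) *v (z - x)) / 2 + lam / 2 * (x \<bullet> x - z \<bullet> z)"
proof -
  have g: "g = - (A *v x + lam *\<^sub>R x)" using kkt by (simp add: matrix_vector_mult_shift)
  have "x \<bullet> (A *v z) = z \<bullet> (A *v x)"
    using inner_matrix_vector_symmetric[OF sym, of x z] by (simp add: inner_commute)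
  then show ?thesis
    unfolding trs_obj_def g matrix_vector_mult_shift
    by (simp add: matrix_vector_mult_diff_distrib inner_diff_left inner_diff_right
        inner_add_right inner_commute[of x z] field_simps)
qed

lemma energy_error_le_of_trs_obj_le:
  fixes A :: "real^'n^'n"
  assumes sym: "transpose A = A" and kkt: "(A + lam *\<^sub>R mat 1) *v x = - g"
    and norms: "norm z = norm x" "norm y = norm x" and le: "trs_obj A g z \<le> trs_obj A g y"
  shows "(eig_min A + lam) * (norm (z - x))\<^sup>2 \<le> (eig_max A + lam) * (norm (y - x))\<^sup>2"
proof -
  define D where "D v = v \<bullet> ((A + lam *\<^sub>R mat 1) *v v)" for v
  have bounds: "(eig_min A + lam) * (norm v)\<^sup>2 \<le> D v \<and> D v \<le> (eig_max A + lam) * (norm v)\<^sup>2" for v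
    using rayleigh_quotient_bounds[OF sym, of v]
    unfolding D_def matrix_vector_mult_shift power2_norm_eq_inner
    by (simp add: inner_add_right algebra_simps)
  have "z \<bullet> z = x \<bullet> x" "y \<bullet> y = x \<bullet> x" using norms by (simp_all add: dot_square_norm)
  then have "D (z - x) \<le> D (y - x)"
    using le trs_obj_diff_eq[OF sym kkt, of z] trs_obj_diff_eq[OF sym kkt, of y]
    by (simp add: D_def)
  then show ?thesis using bounds[of "z - x"] bounds[of "y - x"] by linarith
qed

lemma sin_angle_krylov_le:
  fixes A :: "real^'n^'n"
  assumes sym: "transpose A = A" and kkt: "(A + lam *\<^sub>R mat 1) *v x = - g"
    and pos: "0 < eig_min A + lam" and "x \<noteq> 0"
  defines "\<kappa> \<equiv> (eig_max A + lam) / (eig_min A + lam)"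
  shows "sin_angle_subspace x (krylov A g k) \<le> 2 * ((sqrt \<kappa> - 1) / (sqrt \<kappa> + 1)) ^ k"
proof -
  define M where "M = A + lam *\<^sub>R mat 1"
  define \<beta> where "\<beta> = 2 * ((sqrt \<kappa> - 1) / (sqrt \<kappa> + 1)) ^ k"
  have symM: "transpose M = M" using sym by (simp add: M_def transpose_shift)
  have "eig_min A + lam \<le> eig_max A + lam" using eig_min_le_eig_max[OF sym] by simp
  then obtain R where R: "degree R \<le> k" "poly R 0 = 1"
    and small: "\<And>v. eig_min A + lam \<le> v \<Longrightarrow> v \<le> eig_max A + lam \<Longrightarrow> \<bar>poly R v\<bar> \<le> \<beta>"
    using chebyshev_residual_poly_bound[OF pos] unfolding \<beta>_def \<kappa>_def by blast
  have "\<forall>t\<in>real_eigenvalues M. \<bar>poly R t\<bar> \<le> \<beta>"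
  proof
    fix t assume "t \<in> real_eigenvalues M"
    then show "\<bar>poly R t\<bar> \<le> \<beta>"
      using small eigenvalue_between_eig_min_eig_max[OF sym, of "t - lam"]
      by (simp add: M_def real_eigenvalues_shift)
  qed
  then have residual: "norm (poly_mat_vec R M x) \<le> \<beta> * norm x"
    by (rule norm_poly_mat_vec_le[OF symM])
  obtain y where "y \<in> krylov M g k" and y: "x - y = poly_mat_vec R M x"
    using krylov_residual_poly[OF kkt[folded M_def] R] by blast
  then have "y \<in> krylov A g k" by (simp add: M_def krylov_shift)
  obtain P where P: "P \<in> krylov A g k" "\<forall>y\<in>krylov A g k. (x - P) \<bullet> y = 0"
    and sin: "sin_angle_subspace x (krylov A g k) = norm (x - P) / norm x"
    by (rule sin_angle_subspace_eq_projection[OF subspace_krylov])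
  have "norm (x - P) \<le> norm (x - y)"
    by (rule norm_diff_projection_le[OF subspace_krylov P \<open>y \<in> krylov A g k\<close>])
  then show ?thesis using residual \<open>x \<noteq> 0\<close> by (simp add: sin y \<beta>_def divide_le_eq)
qed

lemma gltr_error_le:
  fixes A :: "real^'n^'n"
  assumes sym: "transpose A = A" and kkt: "(A + lam *\<^sub>R mat 1) *v x = - g"
    and pos: "0 < eig_min A + lam" and "0 < \<Delta>"
    and xk: "gltr_iterate A g \<Delta> k x_k" and norms: "norm x = \<Delta>" "norm x_k = \<Delta>"
  defines "\<kappa> \<equiv> (eig_max A + lam) / (eig_min A + lam)"
    and "s \<equiv> sin_angle_subspace x (krylov A g k)"
  shows "(norm (x_k - x))\<^sup>2 \<le> \<kappa> * \<Delta>\<^sup>2 * (s\<^sup>2 + s ^ 4)"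
proof -
  define K where "K = krylov A g k"
  have K: "subspace K" unfolding K_def by (rule subspace_krylov)
  obtain P where P: "P \<in> K" "\<forall>y\<in>K. (x - P) \<bullet> y = 0" and "s = norm (x - P) / norm x"
    unfolding s_def K_def[symmetric] by (rule sin_angle_subspace_eq_projection[OF K])
  then have r: "norm (x - P) = s * \<Delta>" using norms \<open>0 < \<Delta>\<close> by simp
  have "x_k \<in> K" and min: "\<forall>y\<in>K. norm y \<le> \<Delta> \<longrightarrow> trs_obj A g x_k \<le> trs_obj A g y"
    using xk by (simp_all add: gltr_iterate_def K_def)
  then obtain y where y: "y \<in> K" "norm y = \<Delta>"
    and dist: "(norm (y - x))\<^sup>2 = (\<Delta> - norm P)\<^sup>2 + (norm (x - P))\<^sup>2"
    using exists_subspace_sphere_point[OF K P] norms by metis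
  have "orthogonal P (x - P)" using P by (simp add: orthogonal_def inner_commute)
  then have "(norm P)\<^sup>2 + (s * \<Delta>)\<^sup>2 = \<Delta>\<^sup>2"
    using norm_add_Pythagorean[of P "x - P"] norms r by simp
  then have "(norm (y - x))\<^sup>2 \<le> \<Delta>\<^sup>2 * (s\<^sup>2 + s ^ 4)"
    using square_diff_le_of_pythagorean[of "norm P" \<Delta> s] dist r \<open>0 < \<Delta>\<close>
    by (simp add: power_mult_distrib algebra_simps)
  moreover have "(eig_min A + lam) * (norm (x_k - x))\<^sup>2 \<le> (eig_max A + lam) * (norm (y - x))\<^sup>2"
    using energy_error_le_of_trs_obj_le[OF sym kkt] min y norms by simp
  moreover have "0 \<le> eig_max A + lam" using eig_min_le_eig_max[OF sym] pos by simp
  ultimately have "(eig_min A + lam) * (norm (x_k - x))\<^sup>2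
      \<le> (eig_max A + lam) * (\<Delta>\<^sup>2 * (s\<^sup>2 + s ^ 4))"
    by (meson mult_left_mono order_trans)
  then show ?thesis using pos by (simp add: \<kappa>_def field_simps)
qed

lemma INF_norm_diff_scaleR_le:
  fixes x y :: "'a::real_normed_vector"
  assumes "0 < \<Delta>"
  shows "(INF c::real. norm (x /\<^sub>R \<Delta> - c *\<^sub>R y)) \<le> norm (y - x) / \<Delta>"
proof -
  have "(INF c::real. norm (x /\<^sub>R \<Delta> - c *\<^sub>R y)) \<le> norm (x /\<^sub>R \<Delta> - (1 / \<Delta>) *\<^sub>R y)"
    by (rule cINF_lower) (auto intro: bdd_belowI[of _ 0])
  also have "\<dots> = norm (y - x) / \<Delta>"
    using assms
    by (simp add: norm_minus_commute scaleR_diff_right[symmetric] divide_inverse_commute)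
  finally show ?thesis .
qed

lemma gltr_angle_le:
  fixes A :: "real^'n^'n"
  assumes sym: "transpose A = A" and kkt: "(A + lam *\<^sub>R mat 1) *v x = - g"
    and pos: "0 < eig_min A + lam" and "0 < \<Delta>"
    and xk: "gltr_iterate A g \<Delta> k x_k" and norms: "norm x = \<Delta>" "norm x_k = \<Delta>"
  defines "\<kappa> \<equiv> (eig_max A + lam) / (eig_min A + lam)"
    and "s \<equiv> sin_angle_subspace x (krylov A g k)"
  shows "(INF c::real. norm (x /\<^sub>R \<Delta> - c *\<^sub>R x_k)) \<le> sqrt \<kappa> * sqrt (s\<^sup>2 + s ^ 4)"
proof -
  have "(norm (x_k - x))\<^sup>2 \<le> \<kappa> * \<Delta>\<^sup>2 * (s\<^sup>2 + s ^ 4)"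
    using gltr_error_le[OF sym kkt pos \<open>0 < \<Delta>\<close> xk norms] unfolding \<kappa>_def s_def .
  then have "norm (x_k - x) \<le> sqrt (\<kappa> * \<Delta>\<^sup>2 * (s\<^sup>2 + s ^ 4))" by (rule real_le_rsqrt)
  also have "\<dots> = \<Delta> * (sqrt \<kappa> * sqrt (s\<^sup>2 + s ^ 4))" using \<open>0 < \<Delta>\<close> by (simp add: real_sqrt_mult)
  finally have "norm (x_k - x) / \<Delta> \<le> sqrt \<kappa> * sqrt (s\<^sup>2 + s ^ 4)"
    by (simp add: pos_divide_le_eq[OF \<open>0 < \<Delta>\<close>] mult.commute)
  with INF_norm_diff_scaleR_le[OF \<open>0 < \<Delta>\<close>] show ?thesis by (rule order_trans)
qed

lemma sqrt_sq_add_pow4_le: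
  fixes s r :: real
  assumes "0 \<le> s" "s \<le> 2 * r"
  shows "sqrt (s\<^sup>2 + s ^ 4) \<le> 2 * r + 4 * r\<^sup>2"
proof -
  have "sqrt (s\<^sup>2 + s ^ 4) \<le> sqrt ((s + s\<^sup>2)\<^sup>2)"
    using assms(1)
    by (intro real_sqrt_le_mono) (simp add: power2_eq_square power4_eq_xxxx algebra_simps)
  also have "\<dots> = s + s\<^sup>2" using assms(1) by simp
  also have "\<dots> \<le> 2 * r + 4 * r\<^sup>2"
    using assms power_mono[OF assms(2) assms(1), of 2] by (simp add: power_mult_distrib)
  finally show ?thesis .
qed

theorem theorem4p4:
  fixes A :: "real^'n^'n" and g x_opt x_k :: "real^'n"
    and \<Delta> lam_opt :: real and k :: nat
  assumes symA: "transpose A = A"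
    and g_nz: "g \<noteq> 0"
    and Delta_pos: "\<Delta> > 0"
    and opt_feas: "norm x_opt \<le> \<Delta>"
    and opt_min: "\<forall>y. norm y \<le> \<Delta> \<longrightarrow> trs_obj A g x_opt \<le> trs_obj A g y"
    and lam_nonneg: "lam_opt \<ge> 0"
    and kkt_eq: "(A + lam_opt *\<^sub>R mat 1) *v x_opt = - g"
    and kkt_compl: "lam_opt * (\<Delta> - norm x_opt) = 0"
    and kkt_psd: "\<forall>v. v \<bullet> ((A + lam_opt *\<^sub>R mat 1) *v v) \<ge> 0"
    and easy_case: "lam_opt > - eig_min A"
    and xk_gltr: "gltr_iterate A g \<Delta> k x_k"
    and norm_opt: "norm x_opt = \<Delta>"
    and norm_xk: "norm x_k = \<Delta>"
  defines "\<kappa> \<equiv> (eig_max A + lam_opt) / (eig_min A + lam_opt)"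
  defines "s \<equiv> sin_angle_subspace x_opt (krylov A g k)"
  defines "\<rho> \<equiv> (sqrt \<kappa> - 1) / (sqrt \<kappa> + 1)"
  shows "(INF c::real. norm (x_opt /\<^sub>R \<Delta> - c *\<^sub>R x_k))
           \<le> sqrt \<kappa> * sqrt (s^2 + s^4)
       \<and> sqrt \<kappa> * sqrt (s^2 + s^4)
           \<le> 2 * sqrt \<kappa> * \<rho>^k + 4 * sqrt \<kappa> * \<rho>^(2*k)"
proof -
  have pos: "0 < eig_min A + lam_opt" using easy_case by simp
  have "0 \<le> \<kappa>" using pos eig_min_le_eig_max[OF symA] by (simp add: \<kappa>_def)
  have "s \<le> 2 * \<rho> ^ k"
    using sin_angle_krylov_le[OF symA kkt_eq pos] norm_opt Delta_pos
    unfolding s_def \<rho>_def \<kappa>_def by auto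
  moreover have "0 \<le> s" by (simp add: s_def sin_angle_subspace_def Let_def)
  ultimately have "sqrt (s\<^sup>2 + s ^ 4) \<le> 2 * \<rho> ^ k + 4 * \<rho> ^ (2 * k)"
    using sqrt_sq_add_pow4_le[of s "\<rho> ^ k"] by (simp add: power_mult mult.commute)
  then have "sqrt \<kappa> * sqrt (s\<^sup>2 + s ^ 4) \<le> sqrt \<kappa> * (2 * \<rho> ^ k + 4 * \<rho> ^ (2 * k))"
    using \<open>0 \<le> \<kappa>\<close> by (intro mult_left_mono) auto
  moreover have "(INF c::real. norm (x_opt /\<^sub>R \<Delta> - c *\<^sub>R x_k)) \<le> sqrt \<kappa> * sqrt (s\<^sup>2 + s ^ 4)"
    using gltr_angle_le[OF symA kkt_eq pos Delta_pos xk_gltr norm_opt norm_xk]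
    unfolding \<kappa>_def s_def .
  ultimately show ?thesis by (simp add: algebra_simps)
qed

end
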